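(* Let $k\geqslant 3$ and $\Delta\geqslant 3$ be integers, let $G$ be a finite, simple, connected graph of maximum degree $\Delta$, and let $s$ be a nonnegative integer with $s\leqslant \frac{k-5}{12}$. If $g_k(G)<f(s,\Delta)+1$, then $G$ has diameter at most $k+2s$.
   Context: For integers $m\geqslant 0$ and $\Delta$, let $f(m,\Delta)=\Delta\sum_{i=0}^{m-1}(\Delta-1)^i$ (so $f(0,\Delta)=0$). For a graph $G$, its $k$-th power $G^k$ is the graph on $V(G)$ in which two distinct vertices are adjacent iff their distance in $G$ is at most $k$. $\chi$ denotes the chromatic number and $\Delta(G)$ the maximum degree of $G$. The $k$-gap of $G$ is $g_k(G)=f(k,\Delta(G))+1-\chi(G^k)$. *)

theory Defs
  imports Main
begin

definition simple_graph :: "'a set \<Rightarrow> ('a \<Rightarrow> 'a \<Rightarrow> bool) \<Rightarrow> bool" where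
  "simple_graph V E \<longleftrightarrow> finite V \<and> (\<forall>u v. E u v \<longrightarrow> u \<in> V \<and> v \<in> V)
     \<and> (\<forall>u v. E u v \<longrightarrow> E v u) \<and> (\<forall>u. \<not> E u u)"

definition degree :: "'a set \<Rightarrow> ('a \<Rightarrow> 'a \<Rightarrow> bool) \<Rightarrow> 'a \<Rightarrow> nat" where
  "degree V E u = card {v \<in> V. E u v}"

definition max_degree :: "'a set \<Rightarrow> ('a \<Rightarrow> 'a \<Rightarrow> bool) \<Rightarrow> nat" where
  "max_degree V E = Max (degree V E ` V)"

definition walk :: "('a \<Rightarrow> 'a \<Rightarrow> bool) \<Rightarrow> 'a \<Rightarrow> 'a \<Rightarrow> nat \<Rightarrow> bool" where
  "walk E u v n \<longleftrightarrow> (\<exists>p :: nat \<Rightarrow> 'a. p 0 = u \<and> p n = v \<and> (\<forall>i<n. E (p i) (p (Suc i))))"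

definition connected_graph :: "'a set \<Rightarrow> ('a \<Rightarrow> 'a \<Rightarrow> bool) \<Rightarrow> bool" where
  "connected_graph V E \<longleftrightarrow> V \<noteq> {} \<and> (\<forall>u\<in>V. \<forall>v\<in>V. \<exists>n. walk E u v n)"

text \<open>Graph distance (meaningful for vertices joined by a walk).\<close>
definition gdist :: "('a \<Rightarrow> 'a \<Rightarrow> bool) \<Rightarrow> 'a \<Rightarrow> 'a \<Rightarrow> nat" where
  "gdist E u v = (LEAST n. walk E u v n)"

definition diameter :: "'a set \<Rightarrow> ('a \<Rightarrow> 'a \<Rightarrow> bool) \<Rightarrow> nat" where
  "diameter V E = Max {gdist E u v | u v. u \<in> V \<and> v \<in> V}"

definition power_adj :: "('a \<Rightarrow> 'a \<Rightarrow> bool) \<Rightarrow> nat \<Rightarrow> 'a \<Rightarrow> 'a \<Rightarrow> bool" where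
  "power_adj E k u v \<longleftrightarrow> u \<noteq> v \<and> (\<exists>n\<le>k. walk E u v n)"

definition proper_colouring :: "'a set \<Rightarrow> ('a \<Rightarrow> 'a \<Rightarrow> bool) \<Rightarrow> ('a \<Rightarrow> nat) \<Rightarrow> nat \<Rightarrow> bool" where
  "proper_colouring V E c n \<longleftrightarrow> (\<forall>v\<in>V. c v < n) \<and> (\<forall>u\<in>V. \<forall>v\<in>V. E u v \<longrightarrow> c u \<noteq> c v)"

definition chromatic_number :: "'a set \<Rightarrow> ('a \<Rightarrow> 'a \<Rightarrow> bool) \<Rightarrow> nat" where
  "chromatic_number V E = (LEAST n. \<exists>c. proper_colouring V E c n)"

definition fbound :: "nat \<Rightarrow> int \<Rightarrow> int" where
  "fbound m D = D * (\<Sum>i<m. (D - 1) ^ i)"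

definition kgap :: "nat \<Rightarrow> 'a set \<Rightarrow> ('a \<Rightarrow> 'a \<Rightarrow> bool) \<Rightarrow> int" where
  "kgap k V E = fbound k (int (max_degree V E)) + 1 - int (chromatic_number V (power_adj E k))"

end

theory Submission
  imports Defs
begin

text \<open>Suppose the diameter exceeds k + 2s; take a and b at distance k + 2s + 1 and a midpoint r
  of a geodesic between them. The balls A and B of radius s about a and b are more than k apart,
  so each can be coloured injectively with the same card B \<ge> card A colours. The remaining
  vertices are coloured greedily, farthest from r first. When x is coloured, the already
  coloured vertices within distance k of x avoid some ball of radius s about a vertex z with
  s < d(x, z) \<le> k - s: either z = a (if x is near both a and b) or z lies on a geodesic from x
  towards r, is far from a and b, and its ball is closer to r than x. Counting non-backtracking
  walks from x, as in the Moore bound, the k-ball of x minus such a ball has at most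
  f(k) - f(s) - 1 vertices other than x. Hence f(k) - f(s) colours suffice for G^k, i.e.
  g_k(G) \<ge> f(s) + 1.\<close>

lemma walk_0_iff [simp]: "walk E u v 0 \<longleftrightarrow> u = v"
  unfolding walk_def by auto

lemma walk_Suc_iff: "walk E u v (Suc n) \<longleftrightarrow> (\<exists>u'. E u u' \<and> walk E u' v n)"
proof
  assume "walk E u v (Suc n)"
  then obtain p where p: "p 0 = u" "p (Suc n) = v" "\<forall>i<Suc n. E (p i) (p (Suc i))"
    unfolding walk_def by blast
  have "walk E (p 1) v n"
    unfolding walk_def using p by (intro exI[of _ "\<lambda>i. p (Suc i)"]) auto
  moreover have "E u (p 1)" using p by force
  ultimately show "\<exists>u'. E u u' \<and> walk E u' v n" by blast
next
  assume "\<exists>u'. E u u' \<and> walk E u' v n"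
  then obtain u' p where p: "E u u'" "p 0 = u'" "p n = v" "\<forall>i<n. E (p i) (p (Suc i))"
    unfolding walk_def by blast
  show "walk E u v (Suc n)"
    unfolding walk_def using p
    by (intro exI[of _ "\<lambda>i. if i = 0 then u else p (i - 1)"]) (auto simp: less_Suc_eq_0_disj)
qed

lemma walk_edge: "E u v \<Longrightarrow> walk E u v 1"
  by (simp add: walk_Suc_iff)

lemma walk_append: "walk E u v m \<Longrightarrow> walk E v w n \<Longrightarrow> walk E u w (m + n)"
  by (induction m arbitrary: u) (auto simp: walk_Suc_iff)

definition geom_sum :: "nat \<Rightarrow> nat \<Rightarrow> nat" where
  "geom_sum q n = (\<Sum>i<n. q ^ i)"

lemma geom_sum_0 [simp]: "geom_sum q 0 = 0"
  by (simp add: geom_sum_def)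

lemma geom_sum_Suc: "geom_sum q (Suc n) = 1 + q * geom_sum q n"
  unfolding geom_sum_def sum.lessThan_Suc_shift by (simp add: sum_distrib_left)

lemma geom_sum_mono: "m \<le> n \<Longrightarrow> geom_sum q m \<le> geom_sum q n"
  unfolding geom_sum_def by (rule sum_mono2) auto

lemma geom_sum_split: "m \<le> n \<Longrightarrow> geom_sum q n = geom_sum q m + (\<Sum>i\<in>{m..<n}. q ^ i)"
  unfolding geom_sum_def
  using sum.atLeastLessThan_concat[of 0 m n "\<lambda>i. q ^ i"] by (simp add: atLeast0LessThan)

text \<open>The function f of the paper, over the naturals: the number of vertices at distance
  1 to m from the root of the infinite D-regular tree.\<close>

definition moore_bound :: "nat \<Rightarrow> nat \<Rightarrow> nat" where
  "moore_bound D m = D * geom_sum (D - 1) m"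

lemma moore_bound_mono: "m \<le> n \<Longrightarrow> moore_bound D m \<le> moore_bound D n"
  unfolding moore_bound_def by (simp add: geom_sum_mono)

text \<open>Layers and branches of the Moore tree hanging at the edge from w to u: endpoints of
  non-backtracking walks from u whose first step does not return to w.\<close>

fun nb_layer :: "('a \<Rightarrow> 'a \<Rightarrow> bool) \<Rightarrow> 'a \<Rightarrow> 'a \<Rightarrow> nat \<Rightarrow> 'a set" where
  "nb_layer E w u 0 = {u}"
| "nb_layer E w u (Suc j) = (\<Union>u'\<in>{u'. E u u'} - {w}. nb_layer E u u' j)"

definition nb_branch :: "('a \<Rightarrow> 'a \<Rightarrow> bool) \<Rightarrow> 'a \<Rightarrow> 'a \<Rightarrow> nat \<Rightarrow> 'a set" where
  "nb_branch E w u j = (\<Union>i\<le>j. nb_layer E w u i)"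

lemma nb_branch_Suc:
  "nb_branch E w u (Suc j) = insert u (\<Union>u'\<in>{u'. E u u'} - {w}. nb_branch E u u' j)"
  unfolding nb_branch_def atMost_Suc_eq_insert_0 by auto

lemma walk_nb_layer: "y \<in> nb_layer E w u j \<Longrightarrow> walk E u y j"
  by (induction j arbitrary: w u) (auto simp: walk_Suc_iff)

lemma proper_colouring_insert:
  assumes c: "proper_colouring S R c N" and sym: "\<And>u v. R u v \<Longrightarrow> R v u" and "\<not> R x x"
    and fin: "finite {y\<in>S. R x y}" and room: "card (c ` {y\<in>S. R x y}) < N"
  obtains col where "proper_colouring (insert x S) R (c(x := col)) N"
proof -
  let ?F = "c ` {y\<in>S. R x y}"
  have "\<not> {..<N} \<subseteq> ?F"
    using card_mono[OF finite_imageI[OF fin]] room by fastforce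
  then obtain col where col: "col < N" "col \<notin> ?F" by auto
  have adj: "(c(x := col)) u \<noteq> (c(x := col)) v" if "u \<in> insert x S" "v \<in> insert x S" "R u v" for u v
  proof (cases "u = x \<or> v = x")
    case True
    have "c u \<in> ?F" if "u \<in> S" "R x u" for u using that by blast
    then show ?thesis using True that col \<open>\<not> R x x\<close> sym[of u v] by auto
  next
    case False
    then show ?thesis using that c unfolding proper_colouring_def by auto
  qed
  moreover have "(c(x := col)) v < N" if "v \<in> insert x S" for v
    using that c col unfolding proper_colouring_def by auto
  ultimately show ?thesis using that unfolding proper_colouring_def by blast
qed

text \<open>Q is coloured greedily in order of decreasing key, so when x is coloured the coloured
  part T of Q consists of vertices of key at least key x.\<close>

lemma greedy_colouring_extension:
  fixes key :: "'a \<Rightarrow> 'b::linorder"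
  assumes "finite Q" "finite P" "P \<inter> Q = {}"
    and sym: "\<And>u v. R u v \<Longrightarrow> R v u" and irrefl: "\<And>u. \<not> R u u"
    and c0: "proper_colouring P R c0 N"
    and room: "\<And>x T. x \<in> Q \<Longrightarrow> T \<subseteq> Q - {x} \<Longrightarrow> (\<forall>y\<in>T. key x \<le> key y)
       \<Longrightarrow> card (c0 ` {y\<in>P. R x y}) + card {y\<in>T. R x y} < N"
  shows "\<exists>c. proper_colouring (P \<union> Q) R c N"
proof -
  have "\<exists>c. (\<forall>v\<in>P. c v = c0 v) \<and> proper_colouring (P \<union> Q) R c N"
    using \<open>finite Q\<close>
  proof (induction rule: finite_remove_induct)
    case empty
    then show ?case using c0 by auto
  next
    case (remove T)
    have "Min (key ` T) \<in> key ` T" using remove.hyps(1,2) by (intro Min_in) auto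
    then obtain x where x: "x \<in> T" "key x = Min (key ` T)" by auto
    then have min: "\<forall>y\<in>T. key x \<le> key y" using remove.hyps(1) by simp
    obtain c where c: "\<forall>v\<in>P. c v = c0 v" "proper_colouring (P \<union> (T - {x})) R c N"
      using remove.IH[OF x(1)] by blast
    have "x \<notin> P" using x remove.hyps(3) assms(3) by blast
    have fin: "finite {y \<in> P \<union> (T - {x}). R x y}" using assms(2) remove.hyps(1) by simp
    have "c ` {y \<in> P \<union> (T - {x}). R x y} = c0 ` {y\<in>P. R x y} \<union> c ` {y\<in>T - {x}. R x y}"
      using c(1) by (auto simp: image_iff) (metis (mono_tags, lifting) mem_Collect_eq)
    moreover have "card (c ` {y\<in>T - {x}. R x y}) \<le> card {y\<in>T - {x}. R x y}"
      using remove.hyps(1) by (intro card_image_le) simp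
    ultimately have "card (c ` {y \<in> P \<union> (T - {x}). R x y})
        \<le> card (c0 ` {y\<in>P. R x y}) + card {y\<in>T - {x}. R x y}"
      using card_Un_le[of "c0 ` {y\<in>P. R x y}" "c ` {y\<in>T - {x}. R x y}"] by simp
    also have "\<dots> < N" using room[of x "T - {x}"] x remove.hyps(3) min by auto
    finally obtain col where "proper_colouring (insert x (P \<union> (T - {x}))) R (c(x := col)) N"
      using proper_colouring_insert[OF c(2) sym irrefl fin] by blast
    moreover have "insert x (P \<union> (T - {x})) = P \<union> T" using x(1) by blast
    moreover have "\<forall>v\<in>P. (c(x := col)) v = c0 v" using c(1) \<open>x \<notin> P\<close> by simp
    ultimately show ?case by (metis fun_upd_apply)
  qed
  then show ?thesis by blast
qed

lemma proper_colouring_mono: "proper_colouring S R c m \<Longrightarrow> m \<le> n \<Longrightarrow> proper_colouring S R c n"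
  unfolding proper_colouring_def by auto

lemma proper_colouring_Un_injective:
  assumes "finite A" "finite B" "A \<inter> B = {}" "card A \<le> card B"
    and irrefl: "\<And>u. \<not> R u u"
    and apart: "\<And>y y'. y \<in> A \<Longrightarrow> y' \<in> B \<Longrightarrow> \<not> R y y' \<and> \<not> R y' y"
  shows "\<exists>c. proper_colouring (A \<union> B) R c (card B)"
proof -
  obtain hA where hA: "bij_betw hA A {0..<card A}" using ex_bij_betw_finite_nat[OF assms(1)] by blast
  obtain hB where hB: "bij_betw hB B {0..<card B}" using ex_bij_betw_finite_nat[OF assms(2)] by blast
  define c where "c y = (if y \<in> A then hA y else hB y)" for y
  have "c y < card B" if "y \<in> A \<union> B" for y
  proof (cases "y \<in> A")
    case True
    then show ?thesis using bij_betw_apply[OF hA] assms(4) unfolding c_def by fastforce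
  next
    case False
    then show ?thesis using bij_betw_apply[OF hB] that unfolding c_def by fastforce
  qed
  moreover have "c u \<noteq> c v" if uv: "u \<in> A \<union> B" "v \<in> A \<union> B" "R u v" for u v
  proof -
    have "u \<noteq> v" using irrefl uv(3) by blast
    consider "u \<in> A" "v \<in> A" | "u \<in> B" "v \<in> B" using uv apart by blast
    then show ?thesis
      using hA hB \<open>u \<noteq> v\<close> assms(3) unfolding c_def bij_betw_def inj_on_def by cases auto
  qed
  ultimately show ?thesis unfolding proper_colouring_def by blast
qed

locale connected_degree_bounded_graph =
  fixes V :: "'a set" and E :: "'a \<Rightarrow> 'a \<Rightarrow> bool" and D :: nat
  assumes simple: "simple_graph V E" and connected: "connected_graph V E"
    and degree_le: "\<And>v. v \<in> V \<Longrightarrow> degree V E v \<le> D"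
begin

lemma finite_V: "finite V"
  using simple unfolding simple_graph_def by blast

lemma edge_in_V: "E u v \<Longrightarrow> u \<in> V \<and> v \<in> V"
  using simple unfolding simple_graph_def by blast

lemma edge_sym: "E u v \<Longrightarrow> E v u"
  using simple unfolding simple_graph_def by blast

lemma walk_sym: "walk E u v n \<Longrightarrow> walk E v u n"
proof (induction n arbitrary: u)
  case 0 then show ?case by simp
next
  case (Suc n)
  then obtain u' where "E u u'" "walk E u' v n" by (auto simp: walk_Suc_iff)
  then show ?case using Suc.IH walk_append walk_edge edge_sym by fastforce
qed

lemma walk_in_V: "u \<in> V \<Longrightarrow> walk E u v n \<Longrightarrow> v \<in> V"
  by (induction n arbitrary: u) (auto simp: walk_Suc_iff dest: edge_in_V)

lemma walk_gdist: "u \<in> V \<Longrightarrow> v \<in> V \<Longrightarrow> walk E u v (gdist E u v)"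
  unfolding gdist_def using connected unfolding connected_graph_def by (blast intro: LeastI_ex)

lemma gdist_le: "walk E u v n \<Longrightarrow> gdist E u v \<le> n"
  unfolding gdist_def by (rule Least_le)

lemma gdist_commute: "gdist E u v = gdist E v u"
proof -
  have "walk E u v = walk E v u" by (intro ext iffI) (erule walk_sym)+
  then show ?thesis unfolding gdist_def by simp
qed

lemma gdist_self [simp]: "gdist E u u = 0"
  using gdist_le[of u u 0] by simp

lemma gdist_eq_0_iff: "u \<in> V \<Longrightarrow> v \<in> V \<Longrightarrow> gdist E u v = 0 \<longleftrightarrow> u = v"
  using walk_gdist[of u v] by auto

lemma gdist_triangle: "u \<in> V \<Longrightarrow> v \<in> V \<Longrightarrow> w \<in> V \<Longrightarrow> gdist E u w \<le> gdist E u v + gdist E v w"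
  by (intro gdist_le walk_append[of E u v _ w] walk_gdist)

lemma gdist_edge: "E u v \<Longrightarrow> gdist E u v \<le> 1"
  by (intro gdist_le walk_edge)

lemma gdist_Suc_neighbour:
  assumes "u \<in> V" "y \<in> V" "gdist E u y = Suc j"
  obtains u' where "E u u'" "gdist E u' y = j"
proof -
  obtain u' where u': "E u u'" "walk E u' y j"
    using walk_gdist[of u y] assms by (auto simp: walk_Suc_iff)
  have "u' \<in> V" using u' edge_in_V by blast
  then have "Suc j \<le> 1 + gdist E u' y"
    using gdist_triangle[of u u' y] gdist_edge[OF u'(1)] assms by simp
  with gdist_le[OF u'(2)] u'(1) show ?thesis using that by simp
qed

lemma gdist_geodesic_point:
  assumes "x \<in> V" "r \<in> V" "l \<le> gdist E x r"
  shows "\<exists>z\<in>V. gdist E x z = l \<and> gdist E z r = gdist E x r - l"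
  using assms
proof (induction l arbitrary: x)
  case 0 then show ?case by (intro bexI[of _ x]) auto
next
  case (Suc l)
  then obtain j where j: "gdist E x r = Suc j" by (cases "gdist E x r") auto
  then obtain x' where x': "E x x'" "gdist E x' r = j"
    using gdist_Suc_neighbour Suc.prems by metis
  have x'V: "x' \<in> V" using x' edge_in_V by blast
  obtain z where z: "z \<in> V" "gdist E x' z = l" "gdist E z r = j - l"
    using Suc.IH[OF x'V Suc.prems(2)] x' j Suc.prems(3) by auto
  have "gdist E x z \<le> Suc l"
    using gdist_triangle[of x x' z] gdist_edge[OF x'(1)] z x'V Suc.prems by simp
  moreover have "gdist E x r \<le> gdist E x z + gdist E z r"
    using gdist_triangle[of x z r] z Suc.prems by simp
  ultimately show ?case using z j Suc.prems(3) by (intro bexI[of _ z]) auto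
qed

definition ball :: "'a \<Rightarrow> nat \<Rightarrow> 'a set" where
  "ball z s = {y\<in>V. gdist E z y \<le> s}"

lemma finite_neighbours: "finite {v. E u v}"
  using finite_V by (rule rev_finite_subset) (auto dest: edge_in_V)

lemma card_neighbours_le: "u \<in> V \<Longrightarrow> card {v. E u v} \<le> D"
proof -
  assume "u \<in> V"
  have "{v. E u v} = {v\<in>V. E u v}" using edge_in_V by blast
  then show ?thesis using degree_le[OF \<open>u \<in> V\<close>] unfolding degree_def by simp
qed

lemma card_neighbours_Diff_le:
  assumes "u \<in> V" "F \<subseteq> {v. E u v}"
  shows "card ({v. E u v} - F) \<le> D - card F"
  using card_Diff_subset[OF finite_subset[OF assms(2) finite_neighbours] assms(2)]
    card_neighbours_le[OF assms(1)] by simp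

lemma nb_layer_subset_V: "u \<in> V \<Longrightarrow> nb_layer E w u j \<subseteq> V"
  using walk_in_V[OF _ walk_nb_layer] by blast

lemma nb_branch_subset_V: "u \<in> V \<Longrightarrow> nb_branch E w u j \<subseteq> V"
  unfolding nb_branch_def using nb_layer_subset_V by blast

lemma gdist_nb_layer_le: "y \<in> nb_layer E w u j \<Longrightarrow> gdist E u y \<le> j"
  by (rule gdist_le[OF walk_nb_layer])

lemma card_nb_layer_le: "E w u \<Longrightarrow> card (nb_layer E w u j) \<le> (D - 1) ^ j"
proof (induction j arbitrary: w u)
  case 0 then show ?case by simp
next
  case (Suc j)
  let ?S = "{u'. E u u'} - {w}"
  have "card (nb_layer E w u (Suc j)) \<le> (\<Sum>u'\<in>?S. card (nb_layer E u u' j))"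
    using finite_neighbours by (simp add: card_UN_le)
  also have "\<dots> \<le> card ?S * (D - 1) ^ j"
    using sum_mono[of ?S _ "\<lambda>_. (D - 1) ^ j"] Suc.IH by simp
  also have "\<dots> \<le> (D - 1) * (D - 1) ^ j"
    using card_neighbours_Diff_le[of u "{w}"] Suc.prems edge_in_V edge_sym
    by (intro mult_right_mono) auto
  finally show ?case by simp
qed

lemma card_nb_branch_le: "E w u \<Longrightarrow> card (nb_branch E w u j) \<le> geom_sum (D - 1) (Suc j)"
proof -
  assume "E w u"
  have "card (nb_branch E w u j) \<le> (\<Sum>i\<le>j. card (nb_layer E w u i))"
    unfolding nb_branch_def by (rule card_UN_le) simp
  also have "\<dots> \<le> (\<Sum>i\<le>j. (D - 1) ^ i)"
    by (rule sum_mono) (use card_nb_layer_le \<open>E w u\<close> in auto)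
  finally show ?thesis unfolding geom_sum_def using lessThan_Suc_atMost by simp
qed

lemma in_nb_layer_if_gdist:
  "E w u \<Longrightarrow> y \<in> V \<Longrightarrow> gdist E u y = j \<Longrightarrow> j \<le> gdist E w y \<Longrightarrow> y \<in> nb_layer E w u j"
proof (induction j arbitrary: w u)
  case 0 then show ?case using gdist_eq_0_iff edge_in_V by auto
next
  case (Suc j)
  have "u \<in> V" using Suc.prems edge_in_V by blast
  then obtain u' where u': "E u u'" "gdist E u' y = j"
    using gdist_Suc_neighbour Suc.prems(2,3) by metis
  have "u' \<noteq> w" using u' Suc.prems by auto
  moreover have "y \<in> nb_layer E u u' j" using Suc.IH[OF u'(1) Suc.prems(2) u'(2)] Suc.prems by simp
  ultimately show ?case using u' by auto
qed

lemma card_nb_branch_Diff_ball_le: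
  assumes "E w u" and layers: "\<And>i. i < n \<Longrightarrow> nb_layer E w u i \<subseteq> ball z s" and "n \<le> Suc j"
  shows "card (nb_branch E w u j - ball z s) + geom_sum (D - 1) n \<le> geom_sum (D - 1) (Suc j)"
proof -
  have uV: "u \<in> V" using assms edge_in_V by blast
  have "nb_branch E w u j - ball z s \<subseteq> (\<Union>i\<in>{n..<Suc j}. nb_layer E w u i)"
  proof
    fix y assume "y \<in> nb_branch E w u j - ball z s"
    then obtain i where "i \<le> j" "y \<in> nb_layer E w u i" "y \<notin> ball z s"
      unfolding nb_branch_def by blast
    moreover have "n \<le> i" using layers \<open>y \<in> nb_layer E w u i\<close> \<open>y \<notin> ball z s\<close> by (meson not_le subsetD)
    ultimately show "y \<in> (\<Union>i\<in>{n..<Suc j}. nb_layer E w u i)" by auto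
  qed
  moreover have "finite (\<Union>i\<in>{n..<Suc j}. nb_layer E w u i)"
    using nb_layer_subset_V[OF uV] finite_V by (meson UN_least finite_subset)
  ultimately have "card (nb_branch E w u j - ball z s) \<le> card (\<Union>i\<in>{n..<Suc j}. nb_layer E w u i)"
    by (rule card_mono[rotated])
  also have "\<dots> \<le> (\<Sum>i\<in>{n..<Suc j}. card (nb_layer E w u i))" by (rule card_UN_le) simp
  also have "\<dots> \<le> (\<Sum>i\<in>{n..<Suc j}. (D - 1) ^ i)"
    by (rule sum_mono) (use card_nb_layer_le assms(1) in auto)
  finally show ?thesis using geom_sum_split[OF assms(3), of "D - 1"] by simp
qed

lemma nb_layer_subset_ball:
  assumes "E w u" "z \<in> V" "gdist E z u + i \<le> s"
  shows "nb_layer E w u i \<subseteq> ball z s"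
proof
  fix y assume y: "y \<in> nb_layer E w u i"
  have "u \<in> V" using assms(1) edge_in_V by blast
  then have yV: "y \<in> V" using y nb_layer_subset_V by blast
  have "gdist E z y \<le> gdist E z u + gdist E u y"
    using gdist_triangle[OF assms(2) \<open>u \<in> V\<close> yV] .
  then show "y \<in> ball z s"
    using gdist_nb_layer_le[OF y] assms(3) yV unfolding ball_def by simp
qed

lemma card_nb_branch_Suc_Diff_ball_le:
  assumes "E w u" "E u w'" "w' \<noteq> w"
    and layers: "\<And>u' i. E u u' \<Longrightarrow> i < n \<Longrightarrow> nb_layer E u u' i \<subseteq> ball z s" and "n \<le> Suc j"
  shows "card (nb_branch E w u (Suc j) - ball z s)
    \<le> card ({u} - ball z s) + (D - 2) * (geom_sum (D - 1) (Suc j) - geom_sum (D - 1) n)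
      + card (nb_branch E u w' j - ball z s)"
proof -
  have uV: "u \<in> V" using assms(1) edge_in_V by blast
  define U where "U = ball z s"
  define S where "S = {u'. E u u'} - {w, w'}"
  let ?B = "\<Union>u'\<in>S. nb_branch E u u' j - U"
  let ?C = "nb_branch E u w' j - U"
  have "nb_branch E w u (Suc j) - U \<subseteq> ({u} - U) \<union> ?B \<union> ?C"
    unfolding nb_branch_Suc S_def by auto
  moreover have "({u} - U) \<union> ?B \<union> ?C \<subseteq> V"
    using uV assms(2) nb_branch_subset_V edge_in_V unfolding S_def by blast
  ultimately have "card (nb_branch E w u (Suc j) - U) \<le> card (({u} - U) \<union> ?B \<union> ?C)"
    using finite_V by (meson card_mono finite_subset)
  also have "\<dots> \<le> card ({u} - U) + card ?B + card ?C"
    using card_Un_le[of "({u} - U) \<union> ?B" ?C] card_Un_le[of "{u} - U" ?B] by linarith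
  also have "card ?B \<le> (\<Sum>u'\<in>S. card (nb_branch E u u' j - U))"
    using finite_neighbours unfolding S_def by (intro card_UN_le) simp
  also have "\<dots> \<le> (\<Sum>u'\<in>S. geom_sum (D - 1) (Suc j) - geom_sum (D - 1) n)"
  proof (rule sum_mono)
    fix u' assume "u' \<in> S"
    then have "E u u'" unfolding S_def by simp
    from card_nb_branch_Diff_ball_le[OF this layers[OF this] \<open>n \<le> Suc j\<close>]
    show "card (nb_branch E u u' j - U) \<le> geom_sum (D - 1) (Suc j) - geom_sum (D - 1) n"
      unfolding U_def by simp
  qed
  also have "\<dots> = card S * (geom_sum (D - 1) (Suc j) - geom_sum (D - 1) n)" by simp
  also have "card S \<le> D - 2"
    using card_neighbours_Diff_le[OF uV, of "{w, w'}"] assms(1-3) edge_sym unfolding S_def by simp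
  finally show ?thesis unfolding U_def by (simp add: mult_right_mono)
qed

text \<open>In the Moore tree, the ball of radius s about z has
  geom_sum (D - 1) (Suc s) + geom_sum (D - 1) s = 1 + f(s, D) nodes; when z lies at depth m < s
  of the branch, the geom_sum (D - 1) (s - m) of them lying behind w are missing from the branch.\<close>

lemma card_nb_branch_Diff_ball_geodesic:
  assumes "z \<in> V"
  shows "E w u \<Longrightarrow> gdist E u z = m \<Longrightarrow> gdist E w z = Suc m \<Longrightarrow> m + s \<le> j \<Longrightarrow>
    card (nb_branch E w u j - ball z s) + geom_sum (D - 1) (Suc s) + geom_sum (D - 1) s
      \<le> geom_sum (D - 1) (Suc j) + geom_sum (D - 1) (s - m)"
proof (induction m arbitrary: w u j)
  case 0
  then have "u = z" using gdist_eq_0_iff edge_in_V assms by blast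
  then have "nb_layer E w u i \<subseteq> ball z s" if "i < Suc s" for i
    using nb_layer_subset_ball[OF \<open>E w u\<close> assms] that by simp
  then show ?case using card_nb_branch_Diff_ball_le[OF \<open>E w u\<close>, of "Suc s" z s j] 0 by simp
next
  case (Suc m)
  have uV: "u \<in> V" using Suc.prems edge_in_V by blast
  obtain j' where j': "j = Suc j'" using Suc.prems by (cases j) auto
  obtain w' where w': "E u w'" "gdist E w' z = m"
    using gdist_Suc_neighbour[OF uV assms] Suc.prems(2) by metis
  have "w' \<noteq> w" using w' Suc.prems(3) by auto
  define P where "P = geom_sum (D - 1) (Suc j')"
  define p where "p = geom_sum (D - 1) (s - Suc m)"
  have "nb_layer E u u' i \<subseteq> ball z s" if "E u u'" "i < s - Suc m" for u' i
  proof -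
    have "gdist E z u' \<le> Suc (Suc m)"
      using gdist_triangle[OF assms uV, of u'] gdist_edge[OF \<open>E u u'\<close>] edge_in_V[OF \<open>E u u'\<close>]
        Suc.prems(2) gdist_commute[of z u] by simp
    then show ?thesis using nb_layer_subset_ball[OF \<open>E u u'\<close> assms, of i s] that by simp
  qed
  then have split: "card (nb_branch E w u j - ball z s)
      \<le> card ({u} - ball z s) + (D - 2) * (P - p) + card (nb_branch E u w' j' - ball z s)"
    using card_nb_branch_Suc_Diff_ball_le[OF Suc.prems(1) w'(1) \<open>w' \<noteq> w\<close>] Suc.prems(4)
    unfolding j' P_def p_def by simp
  have IH: "card (nb_branch E u w' j' - ball z s) + geom_sum (D - 1) (Suc s) + geom_sum (D - 1) s
      \<le> P + geom_sum (D - 1) (s - m)"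
    using Suc.IH[OF w'] Suc.prems(2,4) j' unfolding P_def by simp
  have root: "card ({u} - ball z s) + geom_sum (D - 1) (s - m) \<le> 1 + (D - 1) * p"
  proof (cases "Suc m \<le> s")
    case True
    then have "u \<in> ball z s" using Suc.prems(2) uV gdist_commute[of z u] unfolding ball_def by simp
    moreover have "s - m = Suc (s - Suc m)" using True by simp
    ultimately show ?thesis unfolding p_def by (simp add: geom_sum_Suc)
  next
    case False
    have "card ({u} - ball z s) \<le> card {u}" by (rule card_mono) auto
    then show ?thesis using False by simp
  qed
  have "{w, w'} \<subseteq> {v. E u v}" using Suc.prems(1) w'(1) edge_sym by auto
  then have "card {w, w'} \<le> D"
    using card_mono[OF finite_neighbours] card_neighbours_le[OF uV] le_trans by blast
  then have "2 \<le> D" using \<open>w' \<noteq> w\<close> by simp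
  then obtain d where "D = d + 2" using le_Suc_ex by (metis add.commute)
  moreover have "p \<le> P" unfolding p_def P_def using Suc.prems(4) j' by (simp add: geom_sum_mono)
  then obtain e where "P = p + e" using le_Suc_ex by blast
  ultimately have "1 + (D - 1) * p + (D - 2) * (P - p) + P = 1 + (D - 1) * P + p"
    by (simp add: algebra_simps)
  then show ?case using split IH root unfolding j' p_def P_def by (simp add: geom_sum_Suc)
qed

lemma punctured_ball_subset_nb_branches:
  assumes "x \<in> V"
  shows "ball x k - {x} \<subseteq> (\<Union>v\<in>{v. E x v}. nb_branch E x v (k - 1))"
proof
  fix y assume y: "y \<in> ball x k - {x}"
  then have yV: "y \<in> V" and "gdist E x y \<noteq> 0" "gdist E x y \<le> k"
    using gdist_eq_0_iff[OF assms] unfolding ball_def by auto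
  then obtain d where d: "gdist E x y = Suc d" by (cases "gdist E x y") auto
  then obtain v where v: "E x v" "gdist E v y = d"
    using gdist_Suc_neighbour[OF assms yV] by metis
  have "y \<in> nb_layer E x v d" using in_nb_layer_if_gdist[OF v(1) yV v(2)] d by simp
  moreover have "d \<le> k - 1" using d \<open>gdist E x y \<le> k\<close> by simp
  ultimately show "y \<in> (\<Union>v\<in>{v. E x v}. nb_branch E x v (k - 1))"
    unfolding nb_branch_def using v(1) by auto
qed

lemma card_punctured_ball_Diff_ball_le:
  assumes xV: "x \<in> V" and zV: "z \<in> V" and "s < gdist E x z" "gdist E x z + s \<le> k"
  shows "card (ball x k - {x} - ball z s) + (1 + moore_bound D s) \<le> moore_bound D k"
proof -
  obtain l where l: "gdist E x z = Suc l" using assms(3) by (cases "gdist E x z") auto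
  obtain v where v: "E x v" "gdist E v z = l" using gdist_Suc_neighbour[OF xV zV l] by metis
  have k: "Suc (k - 1) = k" using assms(4) l by simp
  let ?U = "ball z s"
  let ?A = "\<Union>v'\<in>{v. E x v} - {v}. nb_branch E x v' (k - 1)"
  let ?B = "nb_branch E x v (k - 1) - ?U"
  have "ball x k - {x} - ?U \<subseteq> ?A \<union> ?B"
    using punctured_ball_subset_nb_branches[OF xV] by blast
  moreover have "?A \<union> ?B \<subseteq> V"
  proof -
    have "nb_branch E x v' (k - 1) \<subseteq> V" if "E x v'" for v'
      using that edge_in_V nb_branch_subset_V by blast
    then show ?thesis using v(1) by blast
  qed
  ultimately have "card (ball x k - {x} - ?U) \<le> card ?A + card ?B"
    using card_Un_le[of ?A ?B] finite_V by (meson card_mono finite_subset le_trans)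
  moreover have "card ?A \<le> (D - 1) * geom_sum (D - 1) k"
  proof -
    have "card ?A \<le> (\<Sum>v'\<in>{v. E x v} - {v}. card (nb_branch E x v' (k - 1)))"
      using finite_neighbours by (intro card_UN_le) simp
    also have "\<dots> \<le> (\<Sum>v'\<in>{v. E x v} - {v}. geom_sum (D - 1) k)"
      using card_nb_branch_le[of x _ "k - 1"] unfolding k by (intro sum_mono) simp
    also have "\<dots> = card ({v. E x v} - {v}) * geom_sum (D - 1) k" by simp
    also have "\<dots> \<le> (D - 1) * geom_sum (D - 1) k"
      using card_neighbours_Diff_le[OF xV, of "{v}"] v(1) by (intro mult_right_mono) auto
    finally show ?thesis .
  qed
  moreover have "card ?B + geom_sum (D - 1) (Suc s) + geom_sum (D - 1) s \<le> geom_sum (D - 1) k"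
    using card_nb_branch_Diff_ball_geodesic[OF zV v, of s "k - 1"] assms l k by simp
  moreover obtain d where "D = Suc d"
  proof -
    have "1 \<le> card {v. E x v}" using v(1) finite_neighbours card_0_eq by fastforce
    then show ?thesis using card_neighbours_le[OF xV] that by (cases D) auto
  qed
  ultimately show ?thesis unfolding moore_bound_def by (simp add: geom_sum_Suc algebra_simps)
qed

lemma power_adj_iff: "u \<in> V \<Longrightarrow> v \<in> V \<Longrightarrow> power_adj E k u v \<longleftrightarrow> u \<noteq> v \<and> gdist E u v \<le> k"
  unfolding power_adj_def using gdist_le walk_gdist le_trans by blast

lemma power_adj_sym: "power_adj E k u v \<Longrightarrow> power_adj E k v u"
  unfolding power_adj_def using walk_sym by blast

lemma finite_ball: "finite (ball z s)"
  using finite_V unfolding ball_def by simp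

lemma balls_disjoint:
  assumes "z \<in> V" "a \<in> V" "2 * s < gdist E z a"
  shows "ball z s \<inter> ball a s = {}"
proof (rule ccontr)
  assume "ball z s \<inter> ball a s \<noteq> {}"
  then obtain y where "y \<in> V" "gdist E z y \<le> s" "gdist E a y \<le> s" unfolding ball_def by blast
  then show False
    using gdist_triangle[OF assms(1) \<open>y \<in> V\<close> assms(2)] gdist_commute[of a y] assms(3) by simp
qed

lemma power_adj_subset_punctured_ball:
  "x \<in> V \<Longrightarrow> S \<subseteq> V \<Longrightarrow> {y\<in>S. power_adj E k x y} \<subseteq> ball x k - {x}"
  using power_adj_iff unfolding ball_def by auto

lemma diameter_attained: "\<exists>a\<in>V. \<exists>w\<in>V. gdist E a w = diameter V E"
proof -
  let ?S = "{gdist E u v | u v. u \<in> V \<and> v \<in> V}"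
  have "?S = (\<lambda>(u, v). gdist E u v) ` (V \<times> V)" by auto
  then have "finite ?S" using finite_V by simp
  moreover have "?S \<noteq> {}" using connected unfolding connected_graph_def by blast
  ultimately have "Max ?S \<in> ?S" by (rule Max_in)
  then obtain a w where "a \<in> V" "w \<in> V" "Max ?S = gdist E a w" by blast
  then show ?thesis unfolding diameter_def by (intro bexI[of _ a] bexI[of _ w]) simp_all
qed

lemma pair_at_distance_with_midpoint:
  assumes "L \<le> diameter V E"
  obtains a b r where "a \<in> V" "b \<in> V" "r \<in> V" "gdist E a b = L"
    "gdist E a r + gdist E b r = L" "gdist E a r \<le> Suc (gdist E b r)" "gdist E b r \<le> Suc (gdist E a r)"
    "card (ball a s) \<le> card (ball b s)"
proof -
  obtain a w where "a \<in> V" "w \<in> V" "gdist E a w = diameter V E" using diameter_attained by blast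
  then obtain b where b: "b \<in> V" "gdist E a b = L"
    using gdist_geodesic_point[of a w L] assms by auto
  then obtain r where r: "r \<in> V" "gdist E a r = L div 2" "gdist E r b = L - L div 2"
    using gdist_geodesic_point[OF \<open>a \<in> V\<close> \<open>b \<in> V\<close>, of "L div 2"] by auto
  have swap: "gdist E b r = L - L div 2" "gdist E b a = L"
    using r(3) b(2) gdist_commute[of b r] gdist_commute[of b a] by simp_all
  have half: "L div 2 + (L - L div 2) = L" "L div 2 \<le> Suc (L - L div 2)" "L - L div 2 \<le> Suc (L div 2)"
    by presburger+
  show ?thesis
  proof (cases "card (ball a s) \<le> card (ball b s)")
    case True
    then show ?thesis using that[of a b r] \<open>a \<in> V\<close> b r swap half by simp
  next
    case False
    then show ?thesis using that[of b a r] \<open>a \<in> V\<close> b r swap half by simp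
  qed
qed

context
  fixes k s :: nat and a b r :: 'a
  assumes k_ge: "12 * s + 5 \<le> k"
    and aV: "a \<in> V" and bV: "b \<in> V" and rV: "r \<in> V"
    and dist_ab: "gdist E a b = k + 2 * s + 1"
    and dist_r: "gdist E a r + gdist E b r = k + 2 * s + 1"
    and balanced: "gdist E a r \<le> Suc (gdist E b r)" "gdist E b r \<le> Suc (gdist E a r)"
begin

lemma far_between_end_balls:
  assumes "y \<in> ball a s" "y' \<in> ball b s"
  shows "k < gdist E y y'"
proof -
  have yV: "y \<in> V" "y' \<in> V" using assms unfolding ball_def by auto
  have "gdist E a b \<le> gdist E a y + gdist E y y' + gdist E y' b"
    using gdist_triangle[OF aV yV(1) bV] gdist_triangle[OF yV bV] by simp
  then show ?thesis using assms dist_ab gdist_commute[of y' b] unfolding ball_def by simp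
qed

lemma end_balls_disjoint: "ball a s \<inter> ball b s = {}"
  using far_between_end_balls[of y y for y] by force

lemma card_near_both_ends:
  assumes x: "x \<in> V" "x \<notin> ball a s \<union> ball b s" and near: "gdist E x a \<le> k - s" "gdist E x b \<le> k - s"
  shows "card (ball b s) + card (ball x k - {x} - (ball a s \<union> ball b s)) + (1 + moore_bound D s)
    \<le> moore_bound D k"
proof -
  have "s < gdist E x a" using x aV gdist_commute[of a x] unfolding ball_def by auto
  then have bound: "card (ball x k - {x} - ball a s) + (1 + moore_bound D s) \<le> moore_bound D k"
    using card_punctured_ball_Diff_ball_le[OF x(1) aV] near k_ge by simp
  have "ball b s \<subseteq> ball x k - {x} - ball a s"
  proof
    fix y assume y: "y \<in> ball b s"
    then have "y \<in> V" "gdist E b y \<le> s" unfolding ball_def by auto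
    then have "gdist E x y \<le> k" using gdist_triangle[OF x(1) bV] near k_ge by fastforce
    then show "y \<in> ball x k - {x} - ball a s"
      using y x(2) end_balls_disjoint \<open>y \<in> V\<close> unfolding ball_def by auto
  qed
  then have "ball x k - {x} - ball a s = ball b s \<union> (ball x k - {x} - (ball a s \<union> ball b s))" by blast
  moreover have "card (ball b s \<union> (ball x k - {x} - (ball a s \<union> ball b s)))
      = card (ball b s) + card (ball x k - {x} - (ball a s \<union> ball b s))"
    using finite_ball by (intro card_Un_disjoint) auto
  ultimately show ?thesis using bound by simp
qed

lemma ball_on_geodesic_far_from_ends:
  assumes xV: "x \<in> V" and not_near: "\<not> (gdist E x a \<le> k - s \<and> gdist E x b \<le> k - s)"
  obtains z where "z \<in> V" "s < gdist E x z" "gdist E x z + s \<le> k"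
    "gdist E z r + gdist E x z = gdist E x r" "2 * s < gdist E z a" "2 * s < gdist E z b"
proof -
  let ?t = "gdist E x r"
  have xa: "gdist E x a \<le> ?t + gdist E a r" "?t \<le> gdist E x a + gdist E a r"
    using gdist_triangle[OF xV rV aV] gdist_triangle[OF xV aV rV] gdist_commute[of r a] by simp_all
  have xb: "gdist E x b \<le> ?t + gdist E b r" "?t \<le> gdist E x b + gdist E b r"
    using gdist_triangle[OF xV rV bV] gdist_triangle[OF xV bV rV] gdist_commute[of r b] by simp_all
  have za: "gdist E a r \<le> gdist E z a + gdist E z r" and zb: "gdist E b r \<le> gdist E z b + gdist E z r"
    if "z \<in> V" for z
    using gdist_triangle[OF aV that rV] gdist_triangle[OF bV that rV] gdist_commute[of a z]
      gdist_commute[of b z] by simp_all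
  show ?thesis
  proof (cases "?t - (k - s) + 2 * s < gdist E a r \<and> ?t - (k - s) + 2 * s < gdist E b r")
    case True
    have "s < ?t" using not_near xa(1) xb(1) dist_r balanced k_ge by linarith
    obtain z where z: "z \<in> V" "gdist E x z = min ?t (k - s)" "gdist E z r = ?t - min ?t (k - s)"
      using gdist_geodesic_point[OF xV rV, of "min ?t (k - s)"] by auto
    show ?thesis
    proof (rule that[OF z(1)])
      show "s < gdist E x z" "gdist E x z + s \<le> k" "gdist E z r + gdist E x z = ?t"
        using z \<open>s < ?t\<close> k_ge by auto
      have "gdist E z r = ?t - (k - s)" using z(3) by (simp add: min_def)
      then show "2 * s < gdist E z a" "2 * s < gdist E z b"
        using za[OF z(1)] zb[OF z(1)] True by linarith+
    qed
  next
    case False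
    txt \<open>Now x is far from both a and b, so z can be taken at distance s + 1 from x.\<close>
    then have far: "k + gdist E a r \<le> ?t + 3 * s + 1" "k + gdist E b r \<le> ?t + 3 * s + 1"
      using dist_r balanced k_ge by auto
    then have "Suc s \<le> ?t" using dist_r balanced k_ge by linarith
    obtain z where z: "z \<in> V" "gdist E x z = Suc s" "gdist E z r = ?t - Suc s"
      using gdist_geodesic_point[OF xV rV \<open>Suc s \<le> ?t\<close>] by auto
    have "gdist E x a \<le> Suc s + gdist E z a" "gdist E x b \<le> Suc s + gdist E z b"
      using gdist_triangle[OF xV z(1) aV] gdist_triangle[OF xV z(1) bV] z(2) by simp_all
    show ?thesis
    proof (rule that[OF z(1)])
      show "s < gdist E x z" "gdist E x z + s \<le> k" "gdist E z r + gdist E x z = ?t"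
        using z \<open>Suc s \<le> ?t\<close> k_ge by auto
      show "2 * s < gdist E z a" "2 * s < gdist E z b"
        using far xa(2) xb(2) \<open>gdist E x a \<le> Suc s + gdist E z a\<close> \<open>gdist E x b \<le> Suc s + gdist E z b\<close>
          k_ge by linarith+
    qed
  qed
qed


lemma greedy_room:
  assumes x: "x \<in> V - (ball a s \<union> ball b s)" and T: "T \<subseteq> V - (ball a s \<union> ball b s) - {x}"
    and later: "\<forall>y\<in>T. gdist E r x \<le> gdist E r y"
    and c0: "proper_colouring (ball a s \<union> ball b s) (power_adj E k) c0 (card (ball b s))"
  shows "card (c0 ` {y \<in> ball a s \<union> ball b s. power_adj E k x y}) + card {y\<in>T. power_adj E k x y}
    < moore_bound D k - moore_bound D s"
proof -
  let ?P = "ball a s \<union> ball b s"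
  let ?R = "power_adj E k"
  have xV: "x \<in> V" and PV: "?P \<subseteq> V" and TV: "T \<subseteq> V" using x T unfolding ball_def by auto
  have finT: "finite T" using TV finite_V by (rule finite_subset)
  show ?thesis
  proof (cases "gdist E x a \<le> k - s \<and> gdist E x b \<le> k - s")
    case True
    have "c0 ` {y\<in>?P. ?R x y} \<subseteq> {..<card (ball b s)}" using c0 unfolding proper_colouring_def by auto
    then have "card (c0 ` {y\<in>?P. ?R x y}) \<le> card (ball b s)"
      by (metis card_lessThan card_mono finite_lessThan)
    moreover have "{y\<in>T. ?R x y} \<subseteq> ball x k - {x} - ?P"
      using power_adj_subset_punctured_ball[OF xV TV] T by blast
    then have "card {y\<in>T. ?R x y} \<le> card (ball x k - {x} - ?P)"
      using finite_ball by (intro card_mono) auto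
    moreover have "x \<notin> ?P" using x by blast
    ultimately show ?thesis using card_near_both_ends[OF xV] True by fastforce
  next
    case False
    then obtain z where z: "z \<in> V" "s < gdist E x z" "gdist E x z + s \<le> k"
      "gdist E z r + gdist E x z = gdist E x r" "2 * s < gdist E z a" "2 * s < gdist E z b"
      using ball_on_geodesic_far_from_ends[OF xV] by blast
    have "ball z s \<inter> ?P = {}" using balls_disjoint[OF z(1)] aV bV z(5,6) by blast
    moreover have "ball z s \<inter> T = {}"
    proof -
      have "gdist E r y < gdist E r x" if "y \<in> ball z s" for y
      proof -
        have "y \<in> V" "gdist E z y \<le> s" using that unfolding ball_def by auto
        then show ?thesis
          using gdist_triangle[OF rV z(1) \<open>y \<in> V\<close>] z(2,4) gdist_commute[of r x] gdist_commute[of r z]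
          by linarith
      qed
      then show ?thesis using later by (meson disjoint_iff leD)
    qed
    ultimately have "{y\<in>?P. ?R x y} \<union> {y\<in>T. ?R x y} \<subseteq> ball x k - {x} - ball z s"
      using power_adj_subset_punctured_ball[OF xV PV] power_adj_subset_punctured_ball[OF xV TV] by blast
    then have "card ({y\<in>?P. ?R x y} \<union> {y\<in>T. ?R x y}) \<le> card (ball x k - {x} - ball z s)"
      using finite_ball by (intro card_mono) auto
    moreover have "card ({y\<in>?P. ?R x y} \<union> {y\<in>T. ?R x y}) = card {y\<in>?P. ?R x y} + card {y\<in>T. ?R x y}"
      using finite_ball finT T by (intro card_Un_disjoint) auto
    moreover have "card (c0 ` {y\<in>?P. ?R x y}) \<le> card {y\<in>?P. ?R x y}"
      using finite_ball by (intro card_image_le) simp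
    ultimately show ?thesis using card_punctured_ball_Diff_ball_le[OF xV z(1-3)] by linarith
  qed
qed

lemma power_colouring_of_far_pair:
  assumes "card (ball a s) \<le> card (ball b s)"
  shows "\<exists>c. proper_colouring V (power_adj E k) c (moore_bound D k - moore_bound D s)"
proof -
  let ?P = "ball a s \<union> ball b s"
  have irrefl: "\<And>u. \<not> power_adj E k u u" unfolding power_adj_def by simp
  have apart: "\<not> power_adj E k y y' \<and> \<not> power_adj E k y' y" if "y \<in> ball a s" "y' \<in> ball b s" for y y'
    using far_between_end_balls[OF that] that power_adj_iff[of y y' k] power_adj_iff[of y' y k]
      gdist_commute[of y' y] unfolding ball_def by auto
  obtain c0 where c0: "proper_colouring ?P (power_adj E k) c0 (card (ball b s))"
    using proper_colouring_Un_injective[where R = "power_adj E k",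
        OF finite_ball finite_ball end_balls_disjoint assms irrefl apart]
    by blast
  have "r \<notin> ?P" "gdist E r a \<le> k - s" "gdist E r b \<le> k - s"
    using dist_r balanced k_ge gdist_commute[of r a] gdist_commute[of r b] unfolding ball_def by auto
  then have "card (ball b s) < moore_bound D k - moore_bound D s"
    using card_near_both_ends[OF rV] by fastforce
  then have "proper_colouring ?P (power_adj E k) c0 (moore_bound D k - moore_bound D s)"
    using c0 by (simp add: proper_colouring_mono)
  then have "\<exists>c. proper_colouring (?P \<union> (V - ?P)) (power_adj E k) c (moore_bound D k - moore_bound D s)"
  proof (rule greedy_colouring_extension[where key = "gdist E r", rotated 5])
    show "finite (V - ?P)" "finite ?P" "?P \<inter> (V - ?P) = {}"
      using finite_V finite_ball by auto
    show "power_adj E k v u" if "power_adj E k u v" for u v using power_adj_sym[OF that] .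
  qed (use irrefl greedy_room[OF _ _ _ c0] in auto)
  moreover have "?P \<union> (V - ?P) = V" unfolding ball_def by auto
  ultimately show ?thesis by simp
qed

end

end

lemma degree_le_max_degree: "finite V \<Longrightarrow> v \<in> V \<Longrightarrow> degree V E v \<le> max_degree V E"
  unfolding max_degree_def by simp

lemma fbound_eq_moore_bound: "1 \<le> D \<Longrightarrow> fbound m (int D) = int (moore_bound D m)"
  unfolding fbound_def moore_bound_def geom_sum_def by (simp add: of_nat_diff)

lemma kgap_ge_if_proper_colouring:
  assumes "1 \<le> D" "max_degree V E = D" "s \<le> k"
    and "proper_colouring V (power_adj E k) c (moore_bound D k - moore_bound D s)"
  shows "fbound s (int D) + 1 \<le> kgap k V E"
proof -
  have "chromatic_number V (power_adj E k) \<le> moore_bound D k - moore_bound D s"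
    unfolding chromatic_number_def using assms(4) by (intro Least_le) blast
  moreover have "moore_bound D s \<le> moore_bound D k" using assms(3) by (rule moore_bound_mono)
  ultimately show ?thesis
    unfolding kgap_def assms(2) fbound_eq_moore_bound[OF assms(1)] by linarith
qed

theorem proposition3:
  fixes V :: "'a set" and E :: "'a \<Rightarrow> 'a \<Rightarrow> bool" and k D s :: nat
  assumes "k \<ge> 3" and "D \<ge> 3"
    and "simple_graph V E" and "connected_graph V E"
    and "max_degree V E = D"
    and "12 * int s \<le> int k - 5"
    and "kgap k V E < fbound s (int D) + 1"
  shows "diameter V E \<le> k + 2 * s"
proof (rule ccontr)
  assume "\<not> diameter V E \<le> k + 2 * s"
  have "finite V" using assms(3) unfolding simple_graph_def by blast
  then interpret connected_degree_bounded_graph V E D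
    using assms(3,4) degree_le_max_degree[of V _ E] unfolding assms(5) by unfold_locales
  have k_ge: "12 * s + 5 \<le> k" using assms(6) by linarith
  have "k + 2 * s + 1 \<le> diameter V E" using \<open>\<not> diameter V E \<le> k + 2 * s\<close> by simp
  then obtain a b r where "a \<in> V" "b \<in> V" "r \<in> V" "gdist E a b = k + 2 * s + 1"
    "gdist E a r + gdist E b r = k + 2 * s + 1"
    "gdist E a r \<le> Suc (gdist E b r)" "gdist E b r \<le> Suc (gdist E a r)"
    "card (ball a s) \<le> card (ball b s)"
    by (rule pair_at_distance_with_midpoint)
  then obtain c where "proper_colouring V (power_adj E k) c (moore_bound D k - moore_bound D s)"
    using power_colouring_of_far_pair[OF k_ge] by blast
  then have "fbound s (int D) + 1 \<le> kgap k V E"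
    using kgap_ge_if_proper_colouring[OF _ assms(5)] assms(2) k_ge by simp
  then show False using assms(7) by simp
qed

end
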